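(* For every $L\le n^2$, let $N(L)$ be the number of distinct $n$-operators $f:\{0,1\}^n\to\{0,1\}^n$ computable by a circuit with at most $L$ wires. Then $$\log_2 N(L)\le 2n^2\,4^{L/n}+n\,2^{n-1}+O(n^2\log_2 n),$$ where the constant in the $O(\cdot)$ term is absolute.
   Context: An $n$-operator is a map $f=(f_1,\dots,f_n):\{0,1\}^n\to\{0,1\}^n$. A (general) circuit is a directed acyclic graph with $n$ input nodes $x_1,\dots,x_n$ (of fanin $0$) and $n$ designated output nodes $y_1,\dots,y_n$. Each non-input node may compute an arbitrary boolean function of the values at its in-neighbours, and there is no restriction on fanin or fanout. The circuit computes $f$ if, for every $i$, the function computed at $y_i$ is $f_i$. The number of wires of a circuit is its number of edges. *)

theory Defs
  imports Complex_Main
begin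

text \<open>Nodes are numbered 0,1,...,n+m-1 where
  nodes 0..n-1 are the inputs x_1..x_n and nodes n..n+m-1 are the non-input nodes
  (gates), listed in a topological order (every DAG admits one).  preds v is the
  list of in-neighbours of gate v (distinct, each smaller than v, so the graph is
  acyclic); gfun v is the arbitrary boolean function computed at v from the values
  of its in-neighbours; outs i is the node designated as output y_(i+1).\<close>

record circuit =
  ngates :: nat
  preds :: "nat \<Rightarrow> nat list"
  gfun :: "nat \<Rightarrow> bool list \<Rightarrow> bool"
  outs :: "nat \<Rightarrow> nat"

definition wf_circuit :: "nat \<Rightarrow> circuit \<Rightarrow> bool" where
  "wf_circuit n C \<longleftrightarrow>
     (\<forall>v. n \<le> v \<and> v < n + ngates C \<longrightarrow>
          distinct (preds C v) \<and> (\<forall>u\<in>set (preds C v). u < v)) \<and>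
     (\<forall>i<n. outs C i < n + ngates C)"

definition wires :: "nat \<Rightarrow> circuit \<Rightarrow> nat" where
  "wires n C = (\<Sum>v\<in>{n..<n + ngates C}. length (preds C v))"

fun node_val :: "nat \<Rightarrow> circuit \<Rightarrow> bool list \<Rightarrow> nat \<Rightarrow> bool" where
  "node_val n C xs v =
     (if v < n then xs ! v
      else gfun C v (map (node_val n C xs) (filter (\<lambda>u. u < v) (preds C v))))"

text \<open>The n-operator {0,1}^n -> {0,1}^n computed by C (inputs/outputs as bool lists of
  length n; the function is fixed to [] outside its domain so that equality of
  operators is equality on {0,1}^n).\<close>
definition computed_op :: "nat \<Rightarrow> circuit \<Rightarrow> bool list \<Rightarrow> bool list" where
  "computed_op n C = (\<lambda>xs. if length xs = n
        then map (\<lambda>i. node_val n C xs (outs C i)) [0..<n] else [])"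

definition N_ops :: "nat \<Rightarrow> nat \<Rightarrow> nat" where
  "N_ops n L = card {computed_op n C | C. wf_circuit n C \<and> wires n C \<le> L}"

end

theory Submission
  imports Defs
begin

(* The proof is a counting argument.  Every well-formed circuit is mapped to a code word
   (encode): the labels of the n output nodes, followed by a description of every gate
   of positive fanin, consisting of the labels of its in-neighbours and a bit table of
   length 2^min(fanin, n).  A decoding lemma shows that the code determines the computed
   operator, so N(L) is at most the number of code words of circuits with at most L
   wires.  These are counted with a general bound on lists of weighted items, which
   gives N(L) <= M^n (L+1)^(L+1) M^L 2^(L 2^n / n) with M = n + 2 + L, because the tables
   of gates of total fanin at most L contain at most L 2^n / n bits.  For n >= 2 and
   L <= n^2 the polynomial factors are at most n^(16 n^2), and an elementary estimate
   bounds L 2^n / n by 2 n^2 4^(L/n) + n 2^(n-1).  The case n = 1 follows from the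
   trivial bound 2^(n 2^n) on the number of all n-operators. *)

(* The defining equation of node_val unfolds recursively; it is used only through
   node_val_input and node_val_gate below. *)
declare node_val.simps [simp del]

definition truth_table :: "nat \<Rightarrow> (bool list \<Rightarrow> 'a) \<Rightarrow> 'a list" where
  "truth_table k f = map f (List.n_lists k [True, False])"

lemma length_truth_table [simp]: "length (truth_table k f) = 2 ^ k"
  by (simp add: truth_table_def length_n_lists numeral_2_eq_2)

lemma truth_table_eqD:
  assumes "truth_table k f = truth_table k g" and "length bs = k"
  shows "f bs = g bs"
proof -
  have "bs \<in> set (List.n_lists k [True, False])"
    using assms(2) by (auto simp: set_n_lists)
  then show ?thesis
    using assms(1) unfolding truth_table_def by simp
qed

(* Position of an element in a list (meaningful for distinct lists). *)
definition index_of :: "'a list \<Rightarrow> 'a \<Rightarrow> nat" where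
  "index_of xs x = (THE i. i < length xs \<and> xs ! i = x)"

lemma index_of_nth:
  assumes "distinct xs" and "x \<in> set xs"
  shows "index_of xs x < length xs \<and> xs ! index_of xs x = x"
proof -
  obtain i where i: "i < length xs" "xs ! i = x"
    using assms(2) by (auto simp: in_set_conv_nth)
  have unique: "j = i" if "j < length xs \<and> xs ! j = x" for j
    using nth_eq_iff_index_eq[OF assms(1) _ i(1), of j] that i(2) by simp
  have "index_of xs x = i"
    unfolding index_of_def using i by (intro the_equality[OF _ unique]) simp_all
  then show ?thesis using i by simp
qed

(* Gates of fanin 0 are constants.  The remaining
   (proper) gates are listed in increasing order; a node is named by its label: an input
   by its index, a constant gate by n or n+1 according to its value, and a proper gate
   by n+2 plus its position in the list.  A proper gate of fanin k is described by the
   labels of its in-neighbours and a table of 2^min(k,n) bits: the truth table of its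
   gate function if k < n, and otherwise the truth table of the operator-coordinate it
   computes as a function of the n inputs. *)
definition proper_gates :: "nat \<Rightarrow> circuit \<Rightarrow> nat set" where
  "proper_gates n C = {v. n \<le> v \<and> v < n + ngates C \<and> preds C v \<noteq> []}"

definition gate_list :: "nat \<Rightarrow> circuit \<Rightarrow> nat list" where
  "gate_list n C = sorted_list_of_set (proper_gates n C)"

definition label :: "nat \<Rightarrow> circuit \<Rightarrow> nat \<Rightarrow> nat" where
  "label n C u =
     (if u < n then u
      else if preds C u = [] then n + (if gfun C u [] then 1 else 0)
      else n + 2 + index_of (gate_list n C) u)"

definition gate_table :: "nat \<Rightarrow> circuit \<Rightarrow> nat \<Rightarrow> bool list" where
  "gate_table n C v =
     (if length (preds C v) < n then truth_table (length (preds C v)) (gfun C v)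
      else truth_table n (\<lambda>xs. node_val n C xs v))"

definition encode :: "nat \<Rightarrow> circuit \<Rightarrow> nat list \<times> (nat list \<times> bool list) list" where
  "encode n C =
     (map (\<lambda>i. label n C (outs C i)) [0..<n],
      map (\<lambda>v. (map (label n C) (preds C v), gate_table n C v)) (gate_list n C))"

lemma finite_proper_gates [simp]: "finite (proper_gates n C)"
  unfolding proper_gates_def by (rule finite_subset[of _ "{..<n + ngates C}"]) auto

lemma set_gate_list [simp]: "set (gate_list n C) = proper_gates n C"
  and distinct_gate_list [simp]: "distinct (gate_list n C)"
  and length_gate_list [simp]: "length (gate_list n C) = card (proper_gates n C)"
  by (simp_all add: gate_list_def)

lemma label_cases:
  assumes "u < n + ngates C"
  obtains (input) "u < n" "label n C u = u"
    | (const) "n \<le> u" "preds C u = []" "label n C u = n + (if gfun C u [] then 1 else 0)"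
    | (proper) "u \<in> proper_gates n C" "label n C u = n + 2 + index_of (gate_list n C) u"
  using assms unfolding label_def proper_gates_def by (cases "u < n"; cases "preds C u = []") auto

lemma label_less:
  assumes "u < n + ngates C"
  shows "label n C u < n + 2 + card (proper_gates n C)"
  using assms
proof (cases rule: label_cases)
  case proper
  then show ?thesis using index_of_nth[of "gate_list n C" u] by simp
qed simp_all

lemma node_val_input: "v < n \<Longrightarrow> node_val n C xs v = xs ! v"
  by (subst node_val.simps) simp

lemma node_val_gate:
  assumes "wf_circuit n C" "n \<le> v" "v < n + ngates C"
  shows "node_val n C xs v = gfun C v (map (node_val n C xs) (preds C v))"
proof -
  have "filter (\<lambda>u. u < v) (preds C v) = preds C v"
    using assms unfolding wf_circuit_def by (auto simp: filter_id_conv)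
  then show ?thesis using assms(2) by (subst node_val.simps) simp
qed

lemma preds_less:
  assumes "wf_circuit n C" "n \<le> v" "v < n + ngates C" "u \<in> set (preds C v)"
  shows "u < v"
  using assms unfolding wf_circuit_def by blast

lemma encode_eq_gate:
  assumes "encode n C = encode n C'" "u \<in> proper_gates n C" "u' \<in> proper_gates n C'"
    and "index_of (gate_list n C) u = index_of (gate_list n C') u'"
  shows "map (label n C) (preds C u) = map (label n C') (preds C' u')
    \<and> gate_table n C u = gate_table n C' u'"
proof -
  define i where "i = index_of (gate_list n C) u"
  have "i < length (gate_list n C)" "gate_list n C ! i = u"
    using index_of_nth[of "gate_list n C" u] assms(2) unfolding i_def by auto
  moreover have "i < length (gate_list n C')" "gate_list n C' ! i = u'"
    using index_of_nth[of "gate_list n C'" u'] assms(3,4) unfolding i_def by auto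
  moreover have "map (\<lambda>v. (map (label n C) (preds C v), gate_table n C v)) (gate_list n C)
      = map (\<lambda>v. (map (label n C') (preds C' v), gate_table n C' v)) (gate_list n C')"
    using assms(1) unfolding encode_def by simp
  ultimately show ?thesis
    by (metis (no_types, lifting) nth_map prod.inject)
qed

(* For fanin k < n the arguments
   agree and so do the gate functions, by their truth tables; for fanin >= n the stored
   table is the function of the inputs computed at the gate itself. *)
lemma node_val_eq_if_gate_eq:
  assumes wf: "wf_circuit n C" "wf_circuit n C'"
    and u: "u \<in> proper_gates n C" and u': "u' \<in> proper_gates n C'"
    and labels: "map (label n C) (preds C u) = map (label n C') (preds C' u')"
    and tables: "gate_table n C u = gate_table n C' u'"
    and xs: "length xs = n"
    and preds_eq: "\<And>p p'. p \<in> set (preds C u) \<Longrightarrow> p' \<in> set (preds C' u')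
      \<Longrightarrow> label n C p = label n C' p' \<Longrightarrow> node_val n C xs p = node_val n C' xs p'"
  shows "node_val n C xs u = node_val n C' xs u'"
proof -
  have u_gate: "n \<le> u" "u < n + ngates C" and u'_gate: "n \<le> u'" "u' < n + ngates C'"
    using u u' by (auto simp: proper_gates_def)
  define k where "k = length (preds C u)"
  have k': "length (preds C' u') = k"
    unfolding k_def using arg_cong[OF labels, of length] by simp
  show ?thesis
  proof (cases "k < n")
    case True
    have args: "map (node_val n C xs) (preds C u) = map (node_val n C' xs) (preds C' u')"
    proof (rule nth_equalityI)
      fix j assume "j < length (map (node_val n C xs) (preds C u))"
      then have j: "j < k" by (simp add: k_def)
      have "label n C (preds C u ! j) = label n C' (preds C' u' ! j)"
        using arg_cong[OF labels, of "\<lambda>l. l ! j"] j k' k_def by simp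
      then show "map (node_val n C xs) (preds C u) ! j = map (node_val n C' xs) (preds C' u') ! j"
        using preds_eq[of "preds C u ! j" "preds C' u' ! j"] j k' k_def by simp
    qed (simp add: k_def k')
    have "truth_table k (gfun C u) = truth_table k (gfun C' u')"
      using tables True k' unfolding gate_table_def k_def by simp
    then have "gfun C u (map (node_val n C xs) (preds C u))
        = gfun C' u' (map (node_val n C' xs) (preds C' u'))"
      using truth_table_eqD args by (metis k_def length_map)
    then show ?thesis
      using node_val_gate[OF wf(1) u_gate] node_val_gate[OF wf(2) u'_gate] by simp
  next
    case False
    have "truth_table n (\<lambda>xs. node_val n C xs u) = truth_table n (\<lambda>xs. node_val n C' xs u')"
      using tables False k' unfolding gate_table_def k_def by simp
    then show ?thesis using truth_table_eqD xs by metis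
  qed
qed

(* Induction along the
   topological order of the first circuit, distinguishing inputs, constant gates and
   proper gates by their labels. *)
lemma node_val_eq_if_encode_eq:
  assumes wf: "wf_circuit n C" "wf_circuit n C'"
    and enc: "encode n C = encode n C'" and xs: "length xs = n"
  shows "u < n + ngates C \<Longrightarrow> u' < n + ngates C' \<Longrightarrow> label n C u = label n C' u'
    \<Longrightarrow> node_val n C xs u = node_val n C' xs u'"
proof (induction u arbitrary: u' rule: less_induct)
  case (less u)
  note u = less.prems(1) and u' = less.prems(2) and same_label = less.prems(3)
  show ?case
    using u
  proof (cases rule: label_cases)
    case input
    from u' show ?thesis
      by (cases rule: label_cases) (use input same_label in \<open>auto simp: node_val_input\<close>)
  next
    case const
    from u' show ?thesis
    proof (cases rule: label_cases)
      case const': const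
      then have "gfun C u [] = gfun C' u' []"
        using const same_label by (auto split: if_splits)
      then show ?thesis
        using const const' node_val_gate[OF wf(1) _ u] node_val_gate[OF wf(2) _ u'] by simp
    qed (use const same_label in \<open>auto split: if_splits\<close>)
  next
    case proper
    from u' show ?thesis
    proof (cases rule: label_cases)
      case proper': proper
      have "index_of (gate_list n C) u = index_of (gate_list n C') u'"
        using proper proper' same_label by simp
      then have "map (label n C) (preds C u) = map (label n C') (preds C' u')
          \<and> gate_table n C u = gate_table n C' u'"
        by (rule encode_eq_gate[OF enc proper(1) proper'(1)])
      moreover have "node_val n C xs p = node_val n C' xs p'"
        if "p \<in> set (preds C u)" "p' \<in> set (preds C' u')" "label n C p = label n C' p'" for p p'
      proof -
        have "n \<le> u" "n \<le> u'"
          using proper proper' by (auto simp: proper_gates_def)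
        then have "p < u" "p' < u'"
          using preds_less[OF wf(1) _ u that(1)] preds_less[OF wf(2) _ u' that(2)] by auto
        then show ?thesis
          using less.IH u u' that(3) by simp
      qed
      ultimately show ?thesis
        using node_val_eq_if_gate_eq[OF wf proper(1) proper'(1) _ _ xs] by blast
    qed (use proper same_label in \<open>auto split: if_splits\<close>)
  qed
qed

lemma computed_op_eq_if_encode_eq:
  assumes "wf_circuit n C" "wf_circuit n C'" "encode n C = encode n C'"
  shows "computed_op n C = computed_op n C'"
proof
  fix xs :: "bool list"
  have "node_val n C xs (outs C i) = node_val n C' xs (outs C' i)"
    if "length xs = n" "i < n" for i
  proof -
    have "label n C (outs C i) = label n C' (outs C' i)"
      using arg_cong[OF assms(3), of "\<lambda>e. fst e ! i"] that(2) unfolding encode_def by simp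
    then show ?thesis
      using node_val_eq_if_encode_eq[OF assms that(1)] that(2) assms(1,2)
      unfolding wf_circuit_def by blast
  qed
  then show "computed_op n C xs = computed_op n C' xs"
    unfolding computed_op_def by simp
qed

definition weighted_lists :: "'a set \<Rightarrow> ('a \<Rightarrow> nat) \<Rightarrow> nat \<Rightarrow> nat \<Rightarrow> 'a list set" where
  "weighted_lists A wt m w = {xs. length xs = m \<and> set xs \<subseteq> A \<and> sum_list (map wt xs) \<le> w}"

lemma weighted_lists_Suc:
  assumes "\<And>x. x \<in> A \<Longrightarrow> 1 \<le> wt x"
  shows "weighted_lists A wt (Suc m) w
    \<subseteq> (\<Union>k\<in>{1..w}. \<Union>x\<in>{x \<in> A. wt x = k}. (#) x ` weighted_lists A wt m (w - k))"
proof
  fix ys assume "ys \<in> weighted_lists A wt (Suc m) w"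
  then obtain x xs where "ys = x # xs" "x \<in> A" "xs \<in> weighted_lists A wt m (w - wt x)"
    "wt x \<le> w"
    unfolding weighted_lists_def by (cases ys) auto
  then show "ys \<in> (\<Union>k\<in>{1..w}. \<Union>x\<in>{x \<in> A. wt x = k}. (#) x ` weighted_lists A wt m (w - k))"
    using assms by (intro UN_I[of "wt x"]) auto
qed

lemma card_weighted_lists:
  fixes X :: real
  assumes pos: "\<And>x. x \<in> A \<Longrightarrow> 1 \<le> wt x"
    and fin: "\<And>k. finite {x \<in> A. wt x = k}"
    and card: "\<And>k. 1 \<le> k \<Longrightarrow> real (card {x \<in> A. wt x = k}) \<le> X ^ k"
    and X: "1 \<le> X"
  shows "finite (weighted_lists A wt m w)
    \<and> real (card (weighted_lists A wt m w)) \<le> (real w + 1) ^ m * X ^ w"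
proof (induction m arbitrary: w)
  case 0
  have "weighted_lists A wt 0 w = {[]}" unfolding weighted_lists_def by auto
  then show ?case using X by simp
next
  case (Suc m)
  let ?B = "\<lambda>k. \<Union>x\<in>{x \<in> A. wt x = k}. (#) x ` weighted_lists A wt m (w - k)"
  have fin_B: "finite (?B k)" for k
    using Suc.IH fin by blast
  have card_B: "real (card (?B k)) \<le> X ^ k * ((real w + 1) ^ m * X ^ (w - k))" if "1 \<le> k" for k
  proof -
    have "card (?B k) \<le> (\<Sum>x\<in>{x \<in> A. wt x = k}. card ((#) x ` weighted_lists A wt m (w - k)))"
      by (rule card_UN_le[OF fin])
    also have "\<dots> \<le> card {x \<in> A. wt x = k} * card (weighted_lists A wt m (w - k))"
      using sum_bounded_above[OF card_image_le] Suc.IH by (simp add: card_image inj_on_def)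
    finally have "real (card (?B k))
        \<le> real (card {x \<in> A. wt x = k}) * real (card (weighted_lists A wt m (w - k)))"
      by (simp flip: of_nat_mult)
    also have "\<dots> \<le> X ^ k * ((real w + 1) ^ m * X ^ (w - k))"
    proof (intro mult_mono)
      have "(real (w - k) + 1) ^ m \<le> (real w + 1) ^ m"
        by (intro power_mono) auto
      then have "(real (w - k) + 1) ^ m * X ^ (w - k) \<le> (real w + 1) ^ m * X ^ (w - k)"
        using X by (intro mult_right_mono) auto
      then show "real (card (weighted_lists A wt m (w - k))) \<le> (real w + 1) ^ m * X ^ (w - k)"
        using Suc.IH[of "w - k"] by linarith
    qed (use card[OF that] X in auto)
    finally show ?thesis .
  qed
  have sub: "weighted_lists A wt (Suc m) w \<subseteq> (\<Union>k\<in>{1..w}. ?B k)"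
    by (rule weighted_lists_Suc[OF pos])
  have "real (card (weighted_lists A wt (Suc m) w)) \<le> real (card (\<Union>k\<in>{1..w}. ?B k))"
    by (simp only: of_nat_le_iff) (rule card_mono[OF _ sub], simp add: fin_B)
  also have "\<dots> \<le> (\<Sum>k\<in>{1..w}. real (card (?B k)))"
    using card_UN_le[of "{1..w}" ?B] by (simp flip: of_nat_sum)
  also have "\<dots> \<le> (\<Sum>k\<in>{1..w}. (real w + 1) ^ m * X ^ w)"
  proof (rule sum_mono)
    fix k assume k: "k \<in> {1..w}"
    have "real (card (?B k)) \<le> X ^ k * ((real w + 1) ^ m * X ^ (w - k))"
      using card_B k by simp
    also have "\<dots> = (real w + 1) ^ m * X ^ w"
      using k by (simp add: mult.left_commute flip: power_add)
    finally show "real (card (?B k)) \<le> (real w + 1) ^ m * X ^ w" .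
  qed
  also have "\<dots> \<le> (real w + 1) ^ Suc m * X ^ w"
    using X by (simp add: mult_right_mono)
  finally show ?case
    using finite_subset[OF sub] fin_B by blast
qed

definition descriptors :: "nat \<Rightarrow> nat \<Rightarrow> (nat list \<times> bool list) set" where
  "descriptors n M =
     {(rs, tb). rs \<noteq> [] \<and> set rs \<subseteq> {..<M} \<and> length tb = 2 ^ min (length rs) n}"

lemma finite_bool_lists [simp]: "finite {bs :: bool list. length bs = m}"
  and card_bool_lists [simp]: "card {bs :: bool list. length bs = m} = 2 ^ m"
  using finite_lists_length_eq[of "UNIV :: bool set" m] card_lists_length_eq[of "UNIV :: bool set" m]
  by simp_all

lemma descriptors_of_fanin:
  "{g \<in> descriptors n M. length (fst g) = k} =
     (if k = 0 then {}
      else {rs. set rs \<subseteq> {..<M} \<and> length rs = k} \<times> {tb. length tb = 2 ^ min k n})"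
  unfolding descriptors_def by auto

lemma two_pow_ratio_mono:
  assumes "1 \<le> j" "j \<le> n"
  shows "real n * 2 ^ j \<le> real j * 2 ^ n"
  using assms(2)
proof (induction n rule: dec_induct)
  case (step m)
  have "real (Suc m) * 2 ^ j \<le> 2 * real m * 2 ^ j" using step assms by auto
  also have "\<dots> \<le> 2 * (real j * 2 ^ m)" using step by auto
  finally show ?case by simp
qed simp

(* Table length is at most linear in the fanin: 2^min(k,n) <= k 2^n / n.  Summed
   over the gates this bounds the table bits by L 2^n / n. *)
lemma two_pow_min_le:
  assumes "1 \<le> n" "1 \<le> k"
  shows "2 ^ min k n \<le> real k * (2 ^ n / real n)"
proof (cases "k \<le> n")
  case True
  then show ?thesis
    using two_pow_ratio_mono[of k n] assms by (simp add: field_simps min_def)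
next
  case False
  then show ?thesis using assms by (simp add: field_simps min_def)
qed

lemma card_descriptors_of_fanin:
  assumes "1 \<le> n" "1 \<le> k"
  shows "real (card {g \<in> descriptors n M. length (fst g) = k}) \<le> (real M * 2 powr (2 ^ n / real n)) ^ k"
proof -
  have "card {g \<in> descriptors n M. length (fst g) = k} = M ^ k * 2 ^ 2 ^ min k n"
    using assms(2) by (simp add: descriptors_of_fanin card_cartesian_product card_lists_length_eq)
  then have "real (card {g \<in> descriptors n M. length (fst g) = k})
      = real M ^ k * 2 powr (2 ^ min k n)"
    using powr_realpow[of 2 "2 ^ min k n"] by simp
  also have "\<dots> \<le> real M ^ k * 2 powr (real k * (2 ^ n / real n))"
    using two_pow_min_le[OF assms] by (intro mult_left_mono powr_mono) auto
  also have "\<dots> = (real M * 2 powr (2 ^ n / real n)) ^ k"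
    by (simp add: power_mult_distrib powr_powr mult.commute flip: powr_realpow)
  finally show ?thesis .
qed

lemma fanin_sum_le_wires: "(\<Sum>v\<in>proper_gates n C. length (preds C v)) \<le> wires n C"
  unfolding wires_def by (rule sum_mono2) (auto simp: proper_gates_def)

lemma card_proper_gates_le_wires: "card (proper_gates n C) \<le> wires n C"
proof -
  have "card (proper_gates n C) \<le> (\<Sum>v\<in>proper_gates n C. length (preds C v))"
    using sum_mono[of "proper_gates n C" "\<lambda>_. 1::nat" "\<lambda>v. length (preds C v)"]
    by (auto simp: proper_gates_def Suc_le_eq)
  then show ?thesis using fanin_sum_le_wires[where n = n and C = C] by linarith
qed

lemma encode_mem:
  assumes wf: "wf_circuit n C" and wires: "wires n C \<le> L"
  shows "encode n C \<in> {os. set os \<subseteq> {..<n + 2 + L} \<and> length os = n}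
    \<times> (\<Union>m\<le>L. weighted_lists (descriptors n (n + 2 + L)) (length \<circ> fst) m L)"
proof -
  have gates: "card (proper_gates n C) \<le> L"
    using card_proper_gates_le_wires[where n = n and C = C] wires by simp
  have label: "label n C u < n + 2 + L" if "u < n + ngates C" for u
    using label_less[OF that] gates by simp
  have outputs: "fst (encode n C) \<in> {os. set os \<subseteq> {..<n + 2 + L} \<and> length os = n}"
    using wf label unfolding encode_def wf_circuit_def by auto
  have "snd (encode n C) \<in> weighted_lists (descriptors n (n + 2 + L)) (length \<circ> fst) (card (proper_gates n C)) L"
    unfolding weighted_lists_def
  proof (intro CollectI conjI subsetI)
    show "length (snd (encode n C)) = card (proper_gates n C)"
      by (simp add: encode_def)
  next
    fix g assume "g \<in> set (snd (encode n C))"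
    then obtain v where v: "v \<in> proper_gates n C"
      and g: "g = (map (label n C) (preds C v), gate_table n C v)"
      unfolding encode_def by auto
    have v_gate: "n \<le> v" "v < n + ngates C" "preds C v \<noteq> []"
      using v unfolding proper_gates_def by auto
    have "label n C p < n + 2 + L" if "p \<in> set (preds C v)" for p
      using preds_less[OF wf v_gate(1,2) that] v_gate(2) label by simp
    moreover have "length (gate_table n C v) = 2 ^ min (length (preds C v)) n"
      by (simp add: gate_table_def min_def)
    ultimately show "g \<in> descriptors n (n + 2 + L)"
      using v_gate(3) unfolding descriptors_def g by auto
  next
    have "sum_list (map (length \<circ> fst) (snd (encode n C)))
        = (\<Sum>v\<in>proper_gates n C. length (preds C v))"
      by (simp add: encode_def comp_def sum_list_distinct_conv_sum_set)
    then show "sum_list (map (length \<circ> fst) (snd (encode n C))) \<le> L"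
      using fanin_sum_le_wires[where n = n and C = C] wires by simp
  qed
  then show ?thesis using outputs gates by (cases "encode n C") auto
qed

lemma card_image_le_if_factors:
  assumes "finite (g ` A)" and "\<And>x y. x \<in> A \<Longrightarrow> y \<in> A \<Longrightarrow> g x = g y \<Longrightarrow> f x = f y"
  shows "card (f ` A) \<le> card (g ` A)"
proof -
  have "f x = f (inv_into A g (g x))" if "x \<in> A" for x
  proof (rule assms(2)[OF that])
    show "inv_into A g (g x) \<in> A" and "g x = g (inv_into A g (g x))"
      using that by (simp_all add: inv_into_into f_inv_into_f)
  qed
  then have "f ` A = (\<lambda>z. f (inv_into A g z)) ` (g ` A)"
    unfolding image_image by (rule image_cong[OF refl])
  then show ?thesis using card_image_le[OF assms(1)] by simp
qed

lemma N_ops_image: "N_ops n L = card (computed_op n ` {C. wf_circuit n C \<and> wires n C \<le> L})"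
  unfolding N_ops_def by (rule arg_cong[where f = card]) blast

(* Counting the gate parts of codes: at most (L+1)^(L+1) X^L of them, where
   X = M 2^(2^n/n) bounds the number of descriptions per unit of fanin. *)
lemma card_gate_codes:
  fixes L :: nat
  assumes n: "1 \<le> n" and M: "1 \<le> M"
  defines "Gates \<equiv> \<Union>m\<le>L. weighted_lists (descriptors n M) (length \<circ> fst) m L"
  shows "finite Gates
    \<and> real (card Gates) \<le> (real L + 1) ^ (L + 1) * (real M * 2 powr (2 ^ n / real n)) ^ L"
proof -
  define X where "X = real M * 2 powr (2 ^ n / real n)"
  have "1 * 1 \<le> X"
    unfolding X_def using M by (intro mult_mono') (simp_all add: ge_one_powr_ge_zero)
  then have X: "1 \<le> X" by simp
  have lists: "finite (weighted_lists (descriptors n M) (length \<circ> fst) m L)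
      \<and> real (card (weighted_lists (descriptors n M) (length \<circ> fst) m L)) \<le> (real L + 1) ^ m * X ^ L"
    for m
  proof (rule card_weighted_lists)
    show "1 \<le> (length \<circ> fst) g" if "g \<in> descriptors n M" for g
      using that by (auto simp: descriptors_def Suc_le_eq)
    show "finite {g \<in> descriptors n M. (length \<circ> fst) g = k}" for k
      by (simp add: descriptors_of_fanin finite_lists_length_eq)
    show "real (card {g \<in> descriptors n M. (length \<circ> fst) g = k}) \<le> X ^ k" if "1 \<le> k" for k
      using card_descriptors_of_fanin[OF n that] by (simp add: X_def)
  qed (rule X)
  have "real (card Gates) \<le> (\<Sum>m\<le>L. real (card (weighted_lists (descriptors n M) (length \<circ> fst) m L)))"
    unfolding Gates_def using card_UN_le[of "{..L}"] by (simp flip: of_nat_sum)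
  also have "\<dots> \<le> (\<Sum>m\<le>L. (real L + 1) ^ L * X ^ L)"
    using lists X by (intro sum_mono order_trans[OF conjunct2[OF lists]] mult_right_mono power_increasing) auto
  finally have "real (card Gates) \<le> (real L + 1) ^ (L + 1) * X ^ L"
    by (simp add: algebra_simps)
  then show ?thesis
    using lists unfolding Gates_def X_def by simp
qed

lemma N_ops_le_code_count:
  assumes n: "1 \<le> n"
  shows "real (N_ops n L)
    \<le> real ((n + 2 + L) ^ n * (L + 1) ^ (L + 1) * (n + 2 + L) ^ L) * 2 powr (real L * 2 ^ n / real n)"
proof -
  define M where "M = n + 2 + L"
  define Outs where "Outs = {os. set os \<subseteq> {..<M} \<and> length os = n}"
  define Gates where "Gates = (\<Union>m\<le>L. weighted_lists (descriptors n M) (length \<circ> fst) m L)"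
  define Cs where "Cs = {C. wf_circuit n C \<and> wires n C \<le> L}"
  have gates: "finite Gates
      \<and> real (card Gates) \<le> (real L + 1) ^ (L + 1) * (real M * 2 powr (2 ^ n / real n)) ^ L"
    unfolding Gates_def by (rule card_gate_codes[OF n]) (simp add: M_def)
  have encode: "encode n ` Cs \<subseteq> Outs \<times> Gates"
    using encode_mem unfolding Cs_def Outs_def Gates_def M_def by blast
  have finite: "finite (Outs \<times> Gates)"
    using gates unfolding Outs_def by (simp add: finite_lists_length_eq)
  have "N_ops n L \<le> card (encode n ` Cs)"
    unfolding N_ops_image Cs_def[symmetric]
    using computed_op_eq_if_encode_eq finite_subset[OF encode finite]
    by (intro card_image_le_if_factors) (auto simp: Cs_def)
  also have "\<dots> \<le> card Outs * card Gates"
    using card_mono[OF finite encode] by (simp add: card_cartesian_product)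
  also have "card Outs = M ^ n"
    unfolding Outs_def by (simp add: card_lists_length_eq)
  finally have "real (N_ops n L) \<le> real M ^ n * real (card Gates)"
    by (simp flip: of_nat_mult of_nat_power)
  also have "\<dots> \<le> real M ^ n * ((real L + 1) ^ (L + 1) * (real M * 2 powr (2 ^ n / real n)) ^ L)"
    using gates by (intro mult_left_mono) auto
  also have "(real M * 2 powr (2 ^ n / real n)) ^ L = real M ^ L * 2 powr (real L * 2 ^ n / real n)"
    by (simp add: power_mult_distrib powr_powr mult.commute flip: powr_realpow)
  finally show ?thesis
    unfolding M_def by (simp add: algebra_simps)
qed

lemma code_count_le:
  assumes n: "2 \<le> n" and L: "L \<le> n ^ 2"
  shows "(n + 2 + L) ^ n * (L + 1) ^ (L + 1) * (n + 2 + L) ^ L \<le> n ^ (16 * n ^ 2)"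
proof -
  have sq: "n \<le> n ^ 2" "4 \<le> n ^ 2"
    using n power_mono[OF n, of 2] by (simp_all add: power2_eq_square)
  have "4 * n ^ 2 \<le> n ^ 2 * n ^ 2"
    using sq(2) by (intro mult_right_mono) auto
  then have small: "n + 2 + L \<le> n ^ 4" "L + 1 \<le> n ^ 4"
    using sq L by (simp_all flip: power_add)
  have "(n + 2 + L) ^ n * (L + 1) ^ (L + 1) * (n + 2 + L) ^ L
      \<le> (n ^ 4) ^ n * (n ^ 4) ^ (L + 1) * (n ^ 4) ^ L"
    using small by (intro mult_mono power_mono) auto
  also have "\<dots> = (n ^ 4) ^ (n + 2 * L + 1)"
    by (simp add: mult_2 flip: power_add)
  also have "\<dots> \<le> (n ^ 4) ^ (4 * n ^ 2)"
    using sq L n by (intro power_increasing) auto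
  also have "\<dots> = n ^ (16 * n ^ 2)"
    by (simp flip: power_mult)
  finally show ?thesis .
qed

lemma N_ops_le_powr:
  assumes n: "2 \<le> n" and L: "L \<le> n ^ 2"
  shows "real (N_ops n L) \<le> 2 powr (16 * real n ^ 2 * log 2 (real n) + real L * 2 ^ n / real n)"
proof -
  have "real ((n + 2 + L) ^ n * (L + 1) ^ (L + 1) * (n + 2 + L) ^ L) \<le> real (n ^ (16 * n ^ 2))"
    using code_count_le[OF n L] by (simp only: of_nat_le_iff)
  then have "real (N_ops n L) \<le> real (n ^ (16 * n ^ 2)) * 2 powr (real L * 2 ^ n / real n)"
    using n by (intro order_trans[OF N_ops_le_code_count mult_right_mono]) simp_all
  also have "real (n ^ (16 * n ^ 2)) = 2 powr (16 * real n ^ 2 * log 2 (real n))"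
  proof -
    have "(2::real) powr (16 * real n ^ 2 * log 2 (real n))
        = (2 powr log 2 (real n)) powr real (16 * n ^ 2)"
      by (simp add: powr_powr mult.commute)
    also have "\<dots> = real n ^ (16 * n ^ 2)"
      using n powr_realpow[of "real n" "16 * n ^ 2"] by simp
    finally show ?thesis by simp
  qed
  finally show ?thesis
    by (simp add: powr_add)
qed

(* The trivial bound: there are only 2^(n 2^n) n-operators.  It settles n = 1,
   where log n vanishes. *)
lemma N_ops_le_all_operators: "N_ops n L \<le> 2 ^ (n * 2 ^ n)"
proof -
  define Cs where "Cs = {C. wf_circuit n C \<and> wires n C \<le> L}"
  define Tables where "Tables = {ys. set ys \<subseteq> {zs :: bool list. length zs = n} \<and> length ys = 2 ^ n}"
  have tables: "truth_table n (computed_op n C) \<in> Tables" for C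
    by (auto simp: Tables_def truth_table_def computed_op_def set_n_lists length_n_lists numeral_2_eq_2)
  have "N_ops n L \<le> card ((\<lambda>C. truth_table n (computed_op n C)) ` Cs)"
    unfolding N_ops_image Cs_def[symmetric]
  proof (rule card_image_le_if_factors)
    show "finite ((\<lambda>C. truth_table n (computed_op n C)) ` Cs)"
      using tables by (rule finite_subset[OF image_subsetI]) (simp add: Tables_def finite_lists_length_eq)
    fix C C' assume "truth_table n (computed_op n C) = truth_table n (computed_op n C')"
    then show "computed_op n C = computed_op n C'"
      using truth_table_eqD by (fastforce simp: computed_op_def)
  qed
  also have "\<dots> \<le> card Tables"
    using tables by (intro card_mono) (auto simp: Tables_def finite_lists_length_eq)
  also have "card Tables = 2 ^ (n * 2 ^ n)"
    by (simp add: Tables_def card_lists_length_eq power_mult)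
  finally show ?thesis .
qed

(* The table bits are within the main terms: for L <= n^2,
   L 2^n / n <= 2 n^2 4^(L/n) + n 2^(n-1).  If 2L <= n^2 use the second term; otherwise
   2^n <= 4^(L/n) and L/n <= 2 n^2. *)
lemma table_bits_le:
  assumes n1: "1 \<le> n" and L: "L \<le> n ^ 2"
  shows "real L * 2 ^ n / real n \<le> 2 * real n ^ 2 * 4 powr (real L / real n) + real n * 2 ^ (n - 1)"
proof (cases "2 * L \<le> n ^ 2")
  case True
  have "real (2 * L) \<le> real (n ^ 2)"
    using True by (simp only: of_nat_le_iff)
  then have "real L \<le> real n ^ 2 / 2"
    by simp
  then have "real L * (2 ^ n / real n) \<le> (real n ^ 2 / 2) * (2 ^ n / real n)"
    by (rule mult_right_mono) simp
  also have "\<dots> = real n * 2 ^ (n - 1)"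
    using n1 by (cases n) (simp_all add: power2_eq_square field_simps)
  finally have "real L * 2 ^ n / real n \<le> real n * 2 ^ (n - 1)"
    by simp
  moreover have "0 \<le> 2 * real n ^ 2 * 4 powr (real L / real n)"
    by simp
  ultimately show ?thesis
    by linarith
next
  case False
  then have "real (n ^ 2) < real (2 * L)"
    by (simp only: of_nat_less_iff not_le)
  then have "real n < 2 * (real L / real n)"
    using n1 by (simp add: power2_eq_square field_simps)
  then have "(2::real) powr real n \<le> 2 powr (2 * (real L / real n))"
    by simp
  also have "\<dots> = (2 powr 2) powr (real L / real n)"
    by (rule powr_powr[symmetric])
  finally have "(2::real) ^ n \<le> 4 powr (real L / real n)"
    by (simp add: powr_realpow)
  moreover have "real L / real n \<le> 2 * real n ^ 2"
  proof -
    have "real L \<le> real n ^ 2"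
      using L by (metis of_nat_le_iff of_nat_power)
    also have "\<dots> \<le> 2 * real n ^ 2 * real n"
      using n1 by simp
    finally show ?thesis
      using n1 by (simp add: field_simps)
  qed
  ultimately have "real L / real n * 2 ^ n \<le> 2 * real n ^ 2 * 4 powr (real L / real n)"
    by (intro mult_mono) auto
  then have "real L * 2 ^ n / real n \<le> 2 * real n ^ 2 * 4 powr (real L / real n)"
    by simp
  moreover have "0 \<le> real n * 2 ^ (n - 1)"
    by simp
  ultimately show ?thesis
    by linarith
qed

(* Taking logarithms of a bound on a natural number (log 2 0 = 0). *)
lemma log2_le_of_le_powr:
  assumes "real N \<le> 2 powr y" and "0 \<le> y"
  shows "log 2 (real N) \<le> y"
proof (cases "N = 0")
  case False
  then have "log 2 (real N) \<le> log 2 (2 powr y)"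
    using assms(1) by (intro log_mono) auto
  then show ?thesis by simp
qed (simp add: assms(2) log_def)

theorem mainTheorem2:
  shows "\<exists>c::real. \<forall>n L::nat. 1 \<le> n \<longrightarrow> L \<le> n^2 \<longrightarrow>
           log 2 (real (N_ops n L))
             \<le> 2 * real n ^ 2 * 4 powr (real L / real n) + real n * 2 ^ (n - 1)
                + c * real n ^ 2 * log 2 (real n)"
proof (intro exI allI impI)
  fix n L :: nat
  assume n: "1 \<le> n" and L: "L \<le> n ^ 2"
  let ?main = "2 * real n ^ 2 * 4 powr (real L / real n) + real n * 2 ^ (n - 1)"
  show "log 2 (real (N_ops n L)) \<le> ?main + 16 * real n ^ 2 * log 2 (real n)"
  proof (cases "n = 1")
    case True
    have "real (N_ops n L) \<le> 2 powr 2"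
      using N_ops_le_all_operators[of n L] True by (simp flip: of_nat_le_iff)
    then have "log 2 (real (N_ops n L)) \<le> 2"
      by (rule log2_le_of_le_powr) simp
    moreover have "1 \<le> (4::real) powr (real L / real n)"
      by (rule ge_one_powr_ge_zero) auto
    ultimately show ?thesis
      using True by simp
  next
    case False
    then have "log 2 (real (N_ops n L)) \<le> 16 * real n ^ 2 * log 2 (real n) + real L * 2 ^ n / real n"
      using n L N_ops_le_powr by (intro log2_le_of_le_powr) auto
    then show ?thesis
      using table_bits_le[OF n L] by simp
  qed
qed

end
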